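(* Let $M_L\le GL(7,\mathbb{C})$ be the group generated by the permutation matrices $(12),(23),(34),(56),(67)$ and the matrix $A$ defined in the context. Then $M_L$ is isomorphic to the Coxeter group $W(D_6)$, which has $23040$ elements.
   Context: A permutation $\sigma\in S_7$ is identified with the $7\times7$ permutation matrix sending $e_i$ to $e_{\sigma(i)}$. The matrix $A$ is \[ A=\begin{pmatrix} 1&0&0&0&0&0&0\\ 0&1&0&0&0&0&0\\ 0&0&-1&0&0&0&1\\ 0&0&0&-1&0&0&1\\ 0&0&-1&-1&1&0&1\\ 0&0&-1&-1&0&1&1\\ 0&0&0&0&0&0&1 \end{pmatrix}. \] $W(D_6)$ denotes the Coxeter group of type $D_6$. *)

theory Defs
  imports "Jordan_Normal_Form.Matrix" "HOL-Algebra.Generated_Groups" "HOL-Combinatorics.Transposition"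
begin

definition GL_mat :: "nat \<Rightarrow> ('a::field) mat monoid" where
  "GL_mat n = \<lparr> carrier = {M \<in> carrier_mat n n. invertible_mat M},
                 mult = (\<lambda>M N. M * N), one = 1\<^sub>m n \<rparr>"

definition gen_subgroup :: "nat \<Rightarrow> ('a::field) mat set \<Rightarrow> 'a mat monoid" where
  "gen_subgroup n S = (GL_mat n) \<lparr> carrier := generate (GL_mat n) S \<rparr>"

definition perm_mat :: "nat \<Rightarrow> (nat \<Rightarrow> nat) \<Rightarrow> ('a::field) mat" where
  "perm_mat n \<sigma> = mat n n (\<lambda>(i,j). if i = \<sigma> j then 1 else 0)"

definition A_mat :: "complex mat" where
  "A_mat = mat_of_rows_list 7
    [[1,0,0,0,0,0,0],
     [0,1,0,0,0,0,0],
     [0,0,-1,0,0,0,1],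
     [0,0,0,-1,0,0,1],
     [0,0,-1,-1,1,0,1],
     [0,0,-1,-1,0,1,1],
     [0,0,0,0,0,0,1]]"

(* M_L: generated by the permutation matrices of (12),(23),(34),(56),(67) and A;
   points 1..7 of the paper are indices 0..6 here *)
definition M_L :: "complex mat monoid" where
  "M_L = gen_subgroup 7
     {perm_mat 7 (transpose 0 1), perm_mat 7 (transpose 1 2), perm_mat 7 (transpose 2 3),
      perm_mat 7 (transpose 4 5), perm_mat 7 (transpose 5 6), A_mat}"

definition refl_mat :: "nat \<Rightarrow> (nat \<Rightarrow> real) \<Rightarrow> real mat" where
  "refl_mat n \<alpha> = mat n n (\<lambda>(i,j). (if i = j then 1 else 0)
       - 2 * \<alpha> i * \<alpha> j / (\<Sum>k<n. (\<alpha> k)^2))"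

definition e_vec :: "nat \<Rightarrow> nat \<Rightarrow> real" where
  "e_vec i = (\<lambda>k. if k = i then 1 else 0)"

definition D6_simple_roots :: "(nat \<Rightarrow> real) set" where
  "D6_simple_roots = {(\<lambda>k. e_vec i k - e_vec (Suc i) k) | i. i < 5}
                     \<union> {(\<lambda>k. e_vec 4 k + e_vec 5 k)}"

(* the Coxeter group W(D_6), realised as the reflection group generated by the
   simple reflections of the D_6 root system (its faithful geometric representation) *)
definition W_D6 :: "real mat monoid" where
  "W_D6 = gen_subgroup 6 (refl_mat 6 ` D6_simple_roots)"

end

theory Submission
  imports Defs "HOL-Combinatorics.Permutations"
begin

text \<open>The vector \<open>(1,1,1,1,2,2,2)\<close> is fixed by all generators of \<open>M\<^sub>L\<close>, and in a basis of
  \<open>\<complex>\<^sup>7\<close> extending it the generators act as \<open>diag(h, 1)\<close> for six signed permutation matrices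
  \<open>h\<close> of size 6. These six matrices, like the simple reflections of \<open>D\<^sub>6\<close>, generate the group
  of signed permutation matrices with an even number of signs \<open>-1\<close>: adjacent transpositions
  generate all permutation matrices, and conjugating one sign change of two coordinates by
  permutations yields all of them, hence every even sign change. So the change of basis is an
  isomorphism from \<open>W(D\<^sub>6)\<close> onto \<open>M\<^sub>L\<close>, and \<open>|W(D\<^sub>6)| = 6! \<cdot> 2\<^sup>5 = 23040\<close>.\<close>

lemma invertible_mat_iff_two_sided_inverse:
  fixes M :: "'a::semiring_1 mat"
  assumes "M \<in> carrier_mat n n"
  shows "invertible_mat M \<longleftrightarrow> (\<exists>B\<in>carrier_mat n n. M * B = 1\<^sub>m n \<and> B * M = 1\<^sub>m n)"
proof
  assume "invertible_mat M"
  then obtain B where MB: "M * B = 1\<^sub>m n" and BM: "B * M = 1\<^sub>m (dim_row B)"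
    using assms unfolding invertible_mat_def inverts_mat_def by auto
  have "B \<in> carrier_mat n n"
    using arg_cong[OF MB, of dim_col] arg_cong[OF BM, of dim_col] assms by auto
  with MB BM show "\<exists>B\<in>carrier_mat n n. M * B = 1\<^sub>m n \<and> B * M = 1\<^sub>m n" by auto
next
  assume "\<exists>B\<in>carrier_mat n n. M * B = 1\<^sub>m n \<and> B * M = 1\<^sub>m n"
  then show "invertible_mat M"
    using assms unfolding invertible_mat_def inverts_mat_def by auto
qed

lemma GL_mat_simps:
  "carrier (GL_mat n) = {M \<in> carrier_mat n n. invertible_mat M}"
  "mult (GL_mat n) = (*)"
  "one (GL_mat n) = 1\<^sub>m n"
  by (simp_all add: GL_mat_def)

lemma GL_mat_memI:
  assumes "M \<in> carrier_mat n n" "B \<in> carrier_mat n n" "M * B = 1\<^sub>m n" "B * M = 1\<^sub>m n"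
  shows "M \<in> carrier (GL_mat n)"
  using assms invertible_mat_iff_two_sided_inverse[of M n] by (auto simp: GL_mat_simps)

lemma GL_mat_memE:
  assumes "M \<in> carrier (GL_mat n)"
  obtains B where "M \<in> carrier_mat n n" "B \<in> carrier_mat n n" "M * B = 1\<^sub>m n" "B * M = 1\<^sub>m n"
  using assms invertible_mat_iff_two_sided_inverse[of M n] by (auto simp: GL_mat_simps)

lemma GL_mat_group: "group (GL_mat n :: 'a::field mat monoid)"
proof (rule groupI)
  fix x y :: "'a mat"
  assume "x \<in> carrier (GL_mat n)" "y \<in> carrier (GL_mat n)"
  then obtain B C where x: "x \<in> carrier_mat n n" and B: "B \<in> carrier_mat n n" "x * B = 1\<^sub>m n" "B * x = 1\<^sub>m n"
    and y: "y \<in> carrier_mat n n" and C: "C \<in> carrier_mat n n" "y * C = 1\<^sub>m n" "C * y = 1\<^sub>m n"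
    by (metis GL_mat_memE)
  have "(x * y) * (C * B) = x * ((y * C) * B)"
    using assoc_mult_mat[OF x y mult_carrier_mat[OF C(1) B(1)]] assoc_mult_mat[OF y C(1) B(1)] by simp
  moreover have "(C * B) * (x * y) = C * ((B * x) * y)"
    using assoc_mult_mat[OF C(1) B(1) mult_carrier_mat[OF x y]] assoc_mult_mat[OF B(1) x y] by simp
  ultimately show "x \<otimes>\<^bsub>GL_mat n\<^esub> y \<in> carrier (GL_mat n)"
    using x y B C by (intro GL_mat_memI[of _ n "C * B"]) (auto simp: GL_mat_simps)
next
  fix x y z :: "'a mat"
  assume "x \<in> carrier (GL_mat n)" "y \<in> carrier (GL_mat n)" "z \<in> carrier (GL_mat n)"
  then show "x \<otimes>\<^bsub>GL_mat n\<^esub> y \<otimes>\<^bsub>GL_mat n\<^esub> z = x \<otimes>\<^bsub>GL_mat n\<^esub> (y \<otimes>\<^bsub>GL_mat n\<^esub> z)"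
    by (simp add: GL_mat_simps assoc_mult_mat[of _ n n _ n _ n])
next
  fix x assume "x \<in> carrier (GL_mat n)"
  then obtain B where "x \<in> carrier_mat n n" "B \<in> carrier_mat n n" "x * B = 1\<^sub>m n" "B * x = 1\<^sub>m n"
    by (rule GL_mat_memE)
  then show "\<exists>y\<in>carrier (GL_mat n). y \<otimes>\<^bsub>GL_mat n\<^esub> x = \<one>\<^bsub>GL_mat n\<^esub>"
    by (intro bexI[of _ B] GL_mat_memI[of B n x]) (auto simp: GL_mat_simps)
qed (use GL_mat_memI[of "1\<^sub>m n" n "1\<^sub>m n"] in \<open>auto simp: GL_mat_simps\<close>)

lemma subgroup_GL_mat_mult:
  "subgroup K (GL_mat n) \<Longrightarrow> x \<in> K \<Longrightarrow> y \<in> K \<Longrightarrow> x * y \<in> K"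
  using subgroup.m_closed by (fastforce simp: GL_mat_simps)

lemma subgroup_GL_mat_one: "subgroup K (GL_mat n) \<Longrightarrow> 1\<^sub>m n \<in> K"
  using subgroup.one_closed by (fastforce simp: GL_mat_simps)

lemma generate_GL_mat_mult:
  "x \<in> generate (GL_mat n) S \<Longrightarrow> y \<in> generate (GL_mat n) S \<Longrightarrow> x * y \<in> generate (GL_mat n) S"
  using generate.eng[of x "GL_mat n" S y] by (simp add: GL_mat_simps)

lemma (in group_hom) generate_iso_image:
  assumes "inj_on h (carrier G)" "S \<subseteq> carrier G"
  shows "h \<in> iso (G\<lparr>carrier := generate G S\<rparr>) (H\<lparr>carrier := generate H (h ` S)\<rparr>)"
proof -
  have gen: "generate G S \<subseteq> carrier G" using G.generate_incl[OF assms(2)] .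
  then show ?thesis
    using assms(1) generate_img[OF assms(2)] hom_mult
    by (auto simp: iso_def hom_def bij_betw_def intro: inj_on_subset dest!: subsetD[OF gen])
qed

section \<open>Signed permutation matrices\<close>

definition signed_perm_mat :: "nat \<Rightarrow> (nat \<Rightarrow> nat) \<Rightarrow> (nat \<Rightarrow> 'a) \<Rightarrow> 'a::semiring_1 mat" where
  "signed_perm_mat n \<sigma> s = mat n n (\<lambda>(i,j). if i = \<sigma> j then s j else 0)"

lemma signed_perm_mat_carrier [simp]: "signed_perm_mat n \<sigma> s \<in> carrier_mat n n"
  and dim_signed_perm_mat [simp]:
    "dim_row (signed_perm_mat n \<sigma> s) = n" "dim_col (signed_perm_mat n \<sigma> s) = n"
  by (simp_all add: signed_perm_mat_def)

lemma index_signed_perm_mat [simp]: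
  "i < n \<Longrightarrow> j < n \<Longrightarrow> signed_perm_mat n \<sigma> s $$ (i,j) = (if i = \<sigma> j then s j else 0)"
  by (simp add: signed_perm_mat_def)

lemma perm_mat_eq_signed_perm_mat: "perm_mat n \<sigma> = signed_perm_mat n \<sigma> (\<lambda>_. 1)"
  by (simp add: perm_mat_def signed_perm_mat_def)

lemma signed_perm_mat_cong:
  "(\<And>j. j < n \<Longrightarrow> \<sigma> j = \<sigma>' j) \<Longrightarrow> (\<And>j. j < n \<Longrightarrow> s j = s' j)
    \<Longrightarrow> signed_perm_mat n \<sigma> s = signed_perm_mat n \<sigma>' s'"
  by (intro eq_matI) auto

lemma signed_perm_mat_id: "signed_perm_mat n id (\<lambda>_. 1) = 1\<^sub>m n"
  by (intro eq_matI) auto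

lemma mult_signed_perm_mat:
  assumes "\<tau> permutes {..<n}"
  shows "signed_perm_mat n \<sigma> s * signed_perm_mat n \<tau> t = signed_perm_mat n (\<sigma> \<circ> \<tau>) (\<lambda>j. s (\<tau> j) * t j)"
proof (rule eq_matI)
  fix i j assume "i < dim_row (signed_perm_mat n (\<sigma> \<circ> \<tau>) (\<lambda>j. s (\<tau> j) * t j))"
    "j < dim_col (signed_perm_mat n (\<sigma> \<circ> \<tau>) (\<lambda>j. s (\<tau> j) * t j))"
  then have i: "i < n" and j: "j < n" by auto
  have "\<tau> j < n" using permutes_in_image[OF assms] j by simp
  then have "(\<Sum>k<n. signed_perm_mat n \<sigma> s $$ (i,k) * signed_perm_mat n \<tau> t $$ (k,j))
      = (\<Sum>k<n. if k = \<tau> j then signed_perm_mat n \<sigma> s $$ (i,k) * t j else 0)"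
    using j by (intro sum.cong) auto
  then show "(signed_perm_mat n \<sigma> s * signed_perm_mat n \<tau> t) $$ (i,j)
      = signed_perm_mat n (\<sigma> \<circ> \<tau>) (\<lambda>j. s (\<tau> j) * t j) $$ (i,j)"
    using i j \<open>\<tau> j < n\<close> by (simp add: scalar_prod_def atLeast0LessThan)
qed auto

lemma perm_mat_id: "perm_mat n id = 1\<^sub>m n"
  by (simp add: perm_mat_eq_signed_perm_mat signed_perm_mat_id)

lemma mult_perm_mat:
  "\<tau> permutes {..<n} \<Longrightarrow> perm_mat n \<sigma> * perm_mat n \<tau> = perm_mat n (\<sigma> \<circ> \<tau>)"
  by (simp add: perm_mat_eq_signed_perm_mat mult_signed_perm_mat)

lemma signed_perm_mat_inverse:
  assumes \<sigma>: "\<sigma> permutes {..<n}" and s: "\<And>j. j < n \<Longrightarrow> s j * s j = 1"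
  shows "signed_perm_mat n (inv_into UNIV \<sigma>) (\<lambda>j. s (inv_into UNIV \<sigma> j)) * signed_perm_mat n \<sigma> s = 1\<^sub>m n"
    and "signed_perm_mat n \<sigma> s * signed_perm_mat n (inv_into UNIV \<sigma>) (\<lambda>j. s (inv_into UNIV \<sigma> j)) = 1\<^sub>m n"
proof -
  have "inv_into UNIV \<sigma> j < n" if "j < n" for j
    using permutes_in_image[OF permutes_inv[OF \<sigma>]] that by simp
  then show "signed_perm_mat n (inv_into UNIV \<sigma>) (\<lambda>j. s (inv_into UNIV \<sigma> j)) * signed_perm_mat n \<sigma> s = 1\<^sub>m n"
    and "signed_perm_mat n \<sigma> s * signed_perm_mat n (inv_into UNIV \<sigma>) (\<lambda>j. s (inv_into UNIV \<sigma> j)) = 1\<^sub>m n"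
    using s permutes_inverses[OF \<sigma>]
    by (simp_all add: mult_signed_perm_mat \<sigma> permutes_inv flip: signed_perm_mat_id;
        intro signed_perm_mat_cong; simp)+
qed

lemma signed_perm_mat_GL:
  "\<sigma> permutes {..<n} \<Longrightarrow> (\<And>j. j < n \<Longrightarrow> s j * s j = 1) \<Longrightarrow> signed_perm_mat n \<sigma> s \<in> carrier (GL_mat n)"
  by (rule GL_mat_memI[OF _ _ signed_perm_mat_inverse(2,1)]) auto

lemma signed_perm_mat_inj:
  assumes "signed_perm_mat n \<sigma> s = signed_perm_mat n \<tau> t"
    and \<sigma>: "\<sigma> permutes {..<n}" and \<tau>: "\<tau> permutes {..<n}" and s: "\<And>j. j < n \<Longrightarrow> s j \<noteq> 0"
  shows "\<sigma> = \<tau>" and "\<And>j. j < n \<Longrightarrow> s j = t j"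
proof -
  have agree: "\<sigma> j = \<tau> j \<and> s j = t j" if j: "j < n" for j
  proof -
    have "\<sigma> j < n" using permutes_in_image[OF \<sigma>] j by simp
    then have "s j = (if \<sigma> j = \<tau> j then t j else 0)"
      using arg_cong[OF assms(1), of "\<lambda>M. M $$ (\<sigma> j, j)"] j by simp
    then show ?thesis using s[OF j] by (auto split: if_splits)
  qed
  show "\<sigma> = \<tau>"
  proof
    fix j show "\<sigma> j = \<tau> j"
      using agree permutes_not_in[OF \<sigma>, of j] permutes_not_in[OF \<tau>, of j] by (cases "j < n") auto
  qed
  show "\<And>j. j < n \<Longrightarrow> s j = t j" using agree by blast
qed

section \<open>Even signed permutation matrices\<close>

definition even_signed_perm_mats :: "nat \<Rightarrow> real mat set" where
  "even_signed_perm_mats n = {signed_perm_mat n \<sigma> s | \<sigma> s. \<sigma> permutes {..<n}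
      \<and> (\<forall>j<n. s j = 1 \<or> s j = -1) \<and> (\<Prod>j<n. s j) = 1}"

lemma even_signed_perm_matsI:
  "\<sigma> permutes {..<n} \<Longrightarrow> (\<And>j. j < n \<Longrightarrow> s j = 1 \<or> s j = -1) \<Longrightarrow> (\<Prod>j<n. s j) = 1
    \<Longrightarrow> signed_perm_mat n \<sigma> s \<in> even_signed_perm_mats n"
  unfolding even_signed_perm_mats_def by blast

lemma perm_mat_in_even_signed_perm_mats:
  "\<sigma> permutes {..<n} \<Longrightarrow> perm_mat n \<sigma> \<in> even_signed_perm_mats n"
  by (auto simp: perm_mat_eq_signed_perm_mat intro: even_signed_perm_matsI)

lemma pm_one_mult_self: "(x::'a::ring_1) = 1 \<or> x = -1 \<Longrightarrow> x * x = 1"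
  by auto

lemma even_signed_perm_mats_GL: "even_signed_perm_mats n \<subseteq> carrier (GL_mat n)"
proof
  fix x assume "x \<in> even_signed_perm_mats n"
  then obtain \<sigma> s where "x = signed_perm_mat n \<sigma> s" "\<sigma> permutes {..<n}" "\<forall>j<n. s j = 1 \<or> s j = -1"
    unfolding even_signed_perm_mats_def by blast
  then show "x \<in> carrier (GL_mat n)"
    using pm_one_mult_self by (auto intro!: signed_perm_mat_GL)
qed

lemma even_signed_perm_mats_mult:
  assumes "x \<in> even_signed_perm_mats n" "y \<in> even_signed_perm_mats n"
  shows "x * y \<in> even_signed_perm_mats n"
proof -
  obtain \<sigma> s \<tau> t where x: "x = signed_perm_mat n \<sigma> s" and \<sigma>: "\<sigma> permutes {..<n}"
    and ps: "(\<Prod>j<n. s j) = 1" and y: "y = signed_perm_mat n \<tau> t" and \<tau>: "\<tau> permutes {..<n}"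
    and st: "\<forall>j<n. (s j = 1 \<or> s j = -1) \<and> (t j = 1 \<or> t j = -1)" and pt: "(\<Prod>j<n. t j) = 1"
    using assms unfolding even_signed_perm_mats_def by blast
  have "(\<Prod>j<n. s (\<tau> j) * t j) = (\<Prod>j<n. s (\<tau> j)) * (\<Prod>j<n. t j)"
    by (rule prod.distrib)
  also have "(\<Prod>j<n. s (\<tau> j)) = (\<Prod>j<n. s j)"
    using prod.permute[OF \<tau>, of s] by (simp add: comp_def)
  finally have "(\<Prod>j<n. s (\<tau> j) * t j) = 1" using ps pt by simp
  moreover have "s (\<tau> j) * t j = 1 \<or> s (\<tau> j) * t j = -1" if "j < n" for j
  proof -
    have "\<tau> j < n" using permutes_in_image[OF \<tau>] that by simp
    then show ?thesis using st[rule_format, of "\<tau> j"] st[rule_format, of j] that by auto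
  qed
  ultimately show ?thesis
    unfolding x y mult_signed_perm_mat[OF \<tau>]
    by (intro even_signed_perm_matsI permutes_compose[OF \<tau> \<sigma>])
qed

lemma even_signed_perm_mats_left_inverse:
  assumes "x \<in> even_signed_perm_mats n"
  shows "\<exists>y\<in>even_signed_perm_mats n. y * x = 1\<^sub>m n"
proof -
  obtain \<sigma> s where x: "x = signed_perm_mat n \<sigma> s" and \<sigma>: "\<sigma> permutes {..<n}"
    and s: "\<forall>j<n. s j = 1 \<or> s j = -1" and ps: "(\<Prod>j<n. s j) = 1"
    using assms unfolding even_signed_perm_mats_def by blast
  let ?\<sigma>' = "inv_into UNIV \<sigma>"
  have \<sigma>': "?\<sigma>' permutes {..<n}" using permutes_inv[OF \<sigma>] .
  have "signed_perm_mat n ?\<sigma>' (\<lambda>j. s (?\<sigma>' j)) \<in> even_signed_perm_mats n"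
  proof (rule even_signed_perm_matsI[OF \<sigma>'])
    show "s (?\<sigma>' j) = 1 \<or> s (?\<sigma>' j) = -1" if "j < n" for j
      using s permutes_in_image[OF \<sigma>'] that by simp
    show "(\<Prod>j<n. s (?\<sigma>' j)) = 1"
      using prod.permute[OF \<sigma>', of s] ps by (simp add: comp_def)
  qed
  moreover have "signed_perm_mat n ?\<sigma>' (\<lambda>j. s (?\<sigma>' j)) * x = 1\<^sub>m n"
    unfolding x using s by (intro signed_perm_mat_inverse(1)[OF \<sigma>] pm_one_mult_self) auto
  ultimately show ?thesis by blast
qed

lemma even_signed_perm_mats_subgroup: "subgroup (even_signed_perm_mats n) (GL_mat n)"
proof -
  interpret GL: group "GL_mat n :: real mat monoid" by (rule GL_mat_group)
  show ?thesis
  proof (rule GL.subgroupI)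
    show "even_signed_perm_mats n \<noteq> {}"
      using perm_mat_in_even_signed_perm_mats[OF permutes_id] by blast
  next
    fix x assume x: "x \<in> even_signed_perm_mats n"
    then obtain y where y: "y \<in> even_signed_perm_mats n" "y * x = 1\<^sub>m n"
      using even_signed_perm_mats_left_inverse by blast
    then have "inv\<^bsub>GL_mat n\<^esub> x = y"
      using x even_signed_perm_mats_GL by (intro GL.inv_equality) (auto simp: GL_mat_simps)
    with y show "inv\<^bsub>GL_mat n\<^esub> x \<in> even_signed_perm_mats n" by simp
  qed (use even_signed_perm_mats_GL even_signed_perm_mats_mult in \<open>auto simp: GL_mat_simps\<close>)
qed

lemma prod_pm_one:
  "\<forall>x\<in>A. f x = 1 \<or> f x = -1 \<Longrightarrow> prod f A = 1 \<or> prod f A = (-1::'a::comm_ring_1)"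
  by (induction A rule: infinite_finite_induct) force+

text \<open>An even sign vector of length \<open>m + 1\<close> is determined by its first \<open>m\<close> entries.\<close>

definition extend_signs :: "nat \<Rightarrow> (nat \<Rightarrow> real) \<Rightarrow> nat \<Rightarrow> real" where
  "extend_signs m u j = (if j < m then u j else \<Prod>k<m. u k)"

lemma extend_signs_pm:
  assumes "u \<in> {..<m} \<rightarrow>\<^sub>E {1, -1}"
  shows "extend_signs m u j = 1 \<or> extend_signs m u j = -1"
proof -
  have "(\<Prod>k<m. u k) = 1 \<or> (\<Prod>k<m. u k) = -1"
    using assms by (intro prod_pm_one) auto
  then show ?thesis using assms by (auto simp: extend_signs_def)
qed

lemma even_signed_perm_mats_eq_image:
  "even_signed_perm_mats (Suc m) = (\<lambda>(\<sigma>, u). signed_perm_mat (Suc m) \<sigma> (extend_signs m u))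
     ` ({\<sigma>. \<sigma> permutes {..<Suc m}} \<times> ({..<m} \<rightarrow>\<^sub>E {1, -1}))"
proof (intro equalityI subsetI)
  fix x assume "x \<in> even_signed_perm_mats (Suc m)"
  then obtain \<sigma> s where x: "x = signed_perm_mat (Suc m) \<sigma> s" and \<sigma>: "\<sigma> permutes {..<Suc m}"
    and s: "\<And>j. j < Suc m \<Longrightarrow> s j = 1 \<or> s j = -1" and ps: "(\<Prod>j<Suc m. s j) = 1"
    unfolding even_signed_perm_mats_def by blast
  have "s m = 1 \<or> s m = -1" using s by simp
  with ps have "s m = (\<Prod>j<m. s j)" by auto
  then have "x = signed_perm_mat (Suc m) \<sigma> (extend_signs m (restrict s {..<m}))"
    unfolding x by (intro signed_perm_mat_cong) (auto simp: extend_signs_def less_Suc_eq)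
  moreover have "restrict s {..<m} \<in> {..<m} \<rightarrow>\<^sub>E {1, -1}" using s by auto
  ultimately show "x \<in> (\<lambda>(\<sigma>, u). signed_perm_mat (Suc m) \<sigma> (extend_signs m u))
     ` ({\<sigma>. \<sigma> permutes {..<Suc m}} \<times> ({..<m} \<rightarrow>\<^sub>E {1, -1}))"
    using \<sigma> by (intro image_eqI[of _ _ "(\<sigma>, restrict s {..<m})"]) auto
next
  fix x assume "x \<in> (\<lambda>(\<sigma>, u). signed_perm_mat (Suc m) \<sigma> (extend_signs m u))
     ` ({\<sigma>. \<sigma> permutes {..<Suc m}} \<times> ({..<m} \<rightarrow>\<^sub>E {1, -1}))"
  then obtain \<sigma> u where x: "x = signed_perm_mat (Suc m) \<sigma> (extend_signs m u)"
    and \<sigma>: "\<sigma> permutes {..<Suc m}" and u: "u \<in> {..<m} \<rightarrow>\<^sub>E {1, -1}" by auto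
  have "(\<Prod>k<m. u k) * (\<Prod>k<m. u k) = 1"
    using extend_signs_pm[OF u, of m] by (auto simp: extend_signs_def)
  then have "(\<Prod>j<Suc m. extend_signs m u j) = 1"
    by (simp add: extend_signs_def)
  then show "x \<in> even_signed_perm_mats (Suc m)"
    unfolding x using \<sigma> extend_signs_pm[OF u] by (intro even_signed_perm_matsI) auto
qed

lemma card_even_signed_perm_mats:
  "card (even_signed_perm_mats (Suc m)) = fact (Suc m) * 2 ^ m"
proof -
  let ?D = "{\<sigma>. \<sigma> permutes {..<Suc m}} \<times> ({..<m} \<rightarrow>\<^sub>E {1, -1::real})"
  have "inj_on (\<lambda>(\<sigma>, u). signed_perm_mat (Suc m) \<sigma> (extend_signs m u)) ?D"
  proof (rule inj_onI, clarify)
    fix \<sigma> u \<tau> v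
    assume \<sigma>: "\<sigma> permutes {..<Suc m}" and u: "u \<in> {..<m} \<rightarrow>\<^sub>E {1, -1}"
      and \<tau>: "\<tau> permutes {..<Suc m}" and v: "v \<in> {..<m} \<rightarrow>\<^sub>E {1, -1}"
      and eq: "signed_perm_mat (Suc m) \<sigma> (extend_signs m u) = signed_perm_mat (Suc m) \<tau> (extend_signs m v)"
    have nz: "extend_signs m u j \<noteq> 0" for j using extend_signs_pm[OF u, of j] by auto
    have "\<sigma> = \<tau>" using signed_perm_mat_inj(1)[OF eq \<sigma> \<tau> nz] .
    moreover have "u = v"
    proof (rule PiE_ext[OF u v])
      fix i assume "i \<in> {..<m}"
      then show "u i = v i"
        using signed_perm_mat_inj(2)[OF eq \<sigma> \<tau> nz, of i] by (simp add: extend_signs_def)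
    qed
    ultimately show "\<sigma> = \<tau> \<and> u = v" by simp
  qed
  then have "card (even_signed_perm_mats (Suc m)) = card ?D"
    by (simp add: even_signed_perm_mats_eq_image card_image)
  also have "\<dots> = fact (Suc m) * 2 ^ m"
    by (simp add: card_cartesian_product card_permutations card_PiE numeral_2_eq_2)
  finally show ?thesis .
qed

section \<open>Generators of the even signed permutation matrices\<close>

lemma perm_mat_transpose_trans:
  assumes K: "subgroup K (GL_mat n)"
    and ab: "perm_mat n (transpose a b) \<in> K" and bc: "perm_mat n (transpose b c) \<in> K"
    and "a < n" "b < n" "c < n"
  shows "perm_mat n (transpose a c) \<in> K"
proof -
  consider "a = c" | "b = c" | "a \<noteq> c" "b \<noteq> c" by blast
  then show ?thesis
  proof cases
    case 1
    then show ?thesis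
      using subgroup_GL_mat_one[OF K] by (simp add: perm_mat_id)
  next
    case 2
    with ab show ?thesis by simp
  next
    case 3
    have "perm_mat n (transpose a b) * perm_mat n (transpose b c) * perm_mat n (transpose a b)
        = perm_mat n (transpose a b \<circ> transpose b c \<circ> transpose a b)"
      using assms by (simp add: mult_perm_mat permutes_swap_id)
    also have "\<dots> = perm_mat n (transpose a c)"
      using 3 by (simp add: transpose_comp_triple)
    finally show ?thesis
      using ab bc subgroup_GL_mat_mult[OF K] by metis
  qed
qed

lemma perm_mat_in_subgroup:
  assumes K: "subgroup K (GL_mat n)"
    and adj: "\<And>i. Suc i < n \<Longrightarrow> perm_mat n (transpose i (Suc i)) \<in> K"
    and p: "p permutes {..<n}"
  shows "perm_mat n p \<in> K"
proof -
  have from_0: "perm_mat n (transpose 0 b) \<in> K" if "b < n" for b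
    using that
  proof (induction b)
    case 0
    show ?case
      using subgroup_GL_mat_one[OF K] by (simp only: transpose_same perm_mat_id)
  next
    case (Suc b)
    then show ?case using adj perm_mat_transpose_trans[OF K] by simp
  qed
  have transp: "perm_mat n (transpose a b) \<in> K" if "a < n" "b < n" for a b
    using perm_mat_transpose_trans[OF K _ from_0[of b], of a] from_0[of a] that
    by (simp add: transpose_commute)
  from p finite_lessThan show ?thesis
  proof (induction rule: permutes_induct)
    case id
    show ?case
      using subgroup_GL_mat_one[OF K] by (simp add: perm_mat_id[unfolded id_def])
  next
    case (swap a b p)
    then have "perm_mat n (transpose a b) * perm_mat n p \<in> K"
      using transp subgroup_GL_mat_mult[OF K] by simp
    with swap show ?case by (simp add: mult_perm_mat comp_def)
  qed
qed

definition sign_flip_mat :: "nat \<Rightarrow> nat set \<Rightarrow> 'a::field mat" where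
  "sign_flip_mat n N = signed_perm_mat n id (\<lambda>j. if j \<in> N then -1 else 1)"

lemma perm_mat_conj_sign_flip_mat:
  assumes p: "p permutes {..<n}"
  shows "perm_mat n p * sign_flip_mat n N * perm_mat n (inv_into UNIV p) = sign_flip_mat n (p ` N)"
proof -
  have "j \<in> p ` N \<longleftrightarrow> inv_into UNIV p j \<in> N" for j
    using permutes_inverses[OF p] by (metis image_iff)
  then show ?thesis
    unfolding perm_mat_eq_signed_perm_mat sign_flip_mat_def
      mult_signed_perm_mat[OF permutes_id] mult_signed_perm_mat[OF permutes_inv[OF p]]
    by (intro signed_perm_mat_cong) (simp_all add: permutes_inverses[OF p])
qed

lemma sign_flip_mat_mult_disjoint:
  "A \<inter> B = {} \<Longrightarrow> sign_flip_mat n A * sign_flip_mat n B = sign_flip_mat n (A \<union> B)"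
  unfolding sign_flip_mat_def mult_signed_perm_mat[OF permutes_id]
  by (intro signed_perm_mat_cong) auto

lemma sign_flip_pair_in_subgroup:
  assumes K: "subgroup K (GL_mat n)"
    and perms: "\<And>p. p permutes {..<n} \<Longrightarrow> perm_mat n p \<in> K"
    and ab: "sign_flip_mat n {a, b} \<in> K" "a \<noteq> b" "a < n" "b < n"
    and cd: "c \<noteq> d" "c < n" "d < n"
  shows "sign_flip_mat n {c, d} \<in> K"
proof -
  define p where "p = transpose (transpose a c b) d \<circ> transpose a c"
  have p: "p permutes {..<n}"
    using ab cd unfolding p_def by (intro permutes_compose permutes_swap_id) (auto simp: transpose_def)
  have img: "p ` {a, b} = {c, d}"
    using ab cd by (auto simp: p_def transpose_def)
  have "sign_flip_mat n {c, d} = perm_mat n p * sign_flip_mat n {a, b} * perm_mat n (inv_into UNIV p)"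
    unfolding perm_mat_conj_sign_flip_mat[OF p] img ..
  then show ?thesis
    using ab perms[OF p] perms[OF permutes_inv[OF p]] subgroup_GL_mat_mult[OF K] by metis
qed

lemma sign_flip_even_in_subgroup:
  assumes K: "subgroup K (GL_mat n)"
    and pairs: "\<And>c d. c < n \<Longrightarrow> d < n \<Longrightarrow> c \<noteq> d \<Longrightarrow> sign_flip_mat n {c, d} \<in> K"
  shows "N \<subseteq> {..<n} \<Longrightarrow> even (card N) \<Longrightarrow> sign_flip_mat n N \<in> K"
proof (induction "card N" arbitrary: N rule: less_induct)
  case less
  show ?case
  proof (cases "N = {}")
    case True
    then show ?thesis
      using subgroup_GL_mat_one[OF K] by (simp add: sign_flip_mat_def signed_perm_mat_id)
  next
    case False
    have fin: "finite N" using less.prems finite_subset by blast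
    with False have "card N \<noteq> 0" by simp
    with less.prems(2) have "card N \<ge> 2" by presburger
    obtain c where c: "c \<in> N" using False by blast
    with \<open>card N \<ge> 2\<close> have "card (N - {c}) \<noteq> 0" by (simp add: card_Diff_singleton)
    then obtain d where d: "d \<in> N" "d \<noteq> c" by (metis card.empty ex_in_conv DiffE singletonI)
    let ?N' = "N - {c, d}"
    have card': "card ?N' = card N - 2" using c d fin by (simp add: card_Diff_subset)
    have "sign_flip_mat n ?N' \<in> K"
      using less.hyps[of ?N'] less.prems card' \<open>card N \<ge> 2\<close> by auto
    moreover have "sign_flip_mat n {c, d} \<in> K" using pairs c d less.prems(1) by auto
    moreover have "sign_flip_mat n {c, d} * sign_flip_mat n ?N' = sign_flip_mat n N"
      using c d by (subst sign_flip_mat_mult_disjoint) (auto intro: arg_cong[where f = "sign_flip_mat n"])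
    ultimately show ?thesis using subgroup_GL_mat_mult[OF K] by metis
  qed
qed

lemma even_signed_perm_mats_subset_subgroup:
  assumes K: "subgroup K (GL_mat n)"
    and adj: "\<And>i. Suc i < n \<Longrightarrow> perm_mat n (transpose i (Suc i)) \<in> K"
    and flip: "sign_flip_mat n {a, b} \<in> K" "a \<noteq> b" "a < n" "b < n"
  shows "even_signed_perm_mats n \<subseteq> K"
proof
  fix x assume "x \<in> even_signed_perm_mats n"
  then obtain \<sigma> s where x: "x = signed_perm_mat n \<sigma> s" and \<sigma>: "\<sigma> permutes {..<n}"
    and s: "\<forall>j<n. s j = 1 \<or> s j = -1" and ps: "(\<Prod>j<n. s j) = 1"
    unfolding even_signed_perm_mats_def by blast
  define N where "N = {j. j < n \<and> s j = -1}"
  have "(\<Prod>j<n. s j) = (\<Prod>j<n. if j \<in> N then -1 else 1)"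
    using s by (intro prod.cong) (auto simp: N_def)
  also have "\<dots> = (-1) ^ card N"
  proof -
    have "{..<n} \<inter> N = N" by (auto simp: N_def)
    then show ?thesis by (simp add: prod.If_cases)
  qed
  finally have "even (card N)" using ps by (simp add: minus_one_power_iff split: if_splits)
  moreover have "x = perm_mat n \<sigma> * sign_flip_mat n N"
    unfolding x perm_mat_eq_signed_perm_mat sign_flip_mat_def mult_signed_perm_mat[OF permutes_id]
    by (intro signed_perm_mat_cong) (use s in \<open>auto simp: N_def\<close>)
  moreover have "sign_flip_mat n {c, d} \<in> K" if "c < n" "d < n" "c \<noteq> d" for c d
    using sign_flip_pair_in_subgroup[OF K perm_mat_in_subgroup[OF K adj] flip] that by blast
  ultimately show "x \<in> K"
    using perm_mat_in_subgroup[OF K adj \<sigma>] sign_flip_even_in_subgroup[OF K, of N]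
      subgroup_GL_mat_mult[OF K] by (auto simp: N_def)
qed

lemma generate_GL_mat_eq_even_signed_perm_mats:
  assumes S: "S \<subseteq> even_signed_perm_mats n"
    and adj: "\<And>i. Suc i < n \<Longrightarrow> perm_mat n (transpose i (Suc i)) \<in> generate (GL_mat n) S"
    and flip: "sign_flip_mat n {a, b} \<in> generate (GL_mat n) S" "a \<noteq> b" "a < n" "b < n"
  shows "generate (GL_mat n) S = even_signed_perm_mats n"
proof
  interpret GL: group "GL_mat n :: real mat monoid" by (rule GL_mat_group)
  show "generate (GL_mat n) S \<subseteq> even_signed_perm_mats n"
    using GL.generate_subgroup_incl[OF S even_signed_perm_mats_subgroup] .
  have "subgroup (generate (GL_mat n) S) (GL_mat n)"
    using GL.generate_is_subgroup S even_signed_perm_mats_GL by blast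
  then show "even_signed_perm_mats n \<subseteq> generate (GL_mat n) S"
    using even_signed_perm_mats_subset_subgroup adj flip by blast
qed

section \<open>The simple reflections of \<open>D\<^sub>6\<close>\<close>

definition neg_transpose_mat :: "nat \<Rightarrow> nat \<Rightarrow> nat \<Rightarrow> real mat" where
  "neg_transpose_mat n a b = signed_perm_mat n (transpose a b) (\<lambda>j. if j = a \<or> j = b then -1 else 1)"

lemma sum_e_vec_pair_sq:
  assumes "a \<noteq> b" "a < n" "b < n" "\<epsilon> = 1 \<or> \<epsilon> = -1"
  shows "(\<Sum>k<n. (e_vec a k + \<epsilon> * e_vec b k)^2) = 2"
proof -
  have "(\<Sum>k<n. (e_vec a k + \<epsilon> * e_vec b k)^2) = (\<Sum>k<n. (if k = a then 1 else 0) + (if k = b then 1 else 0))"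
    using assms by (intro sum.cong) (auto simp: e_vec_def)
  also have "\<dots> = 2" using assms by (simp add: sum.distrib)
  finally show ?thesis .
qed

lemma refl_mat_e_vec_diff:
  assumes "a \<noteq> b" "a < n" "b < n"
  shows "refl_mat n (\<lambda>k. e_vec a k - e_vec b k) = perm_mat n (transpose a b)"
proof -
  have "(\<Sum>k<n. (e_vec a k - e_vec b k)^2) = 2"
    using sum_e_vec_pair_sq[of a b n "-1"] assms by simp
  then show ?thesis
    unfolding refl_mat_def perm_mat_def using assms
    by (intro eq_matI) (auto simp: e_vec_def transpose_def)
qed

lemma refl_mat_e_vec_sum:
  assumes "a \<noteq> b" "a < n" "b < n"
  shows "refl_mat n (\<lambda>k. e_vec a k + e_vec b k) = neg_transpose_mat n a b"
proof -
  have "(\<Sum>k<n. (e_vec a k + e_vec b k)^2) = 2"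
    using sum_e_vec_pair_sq[of a b n 1] assms by simp
  then show ?thesis
    unfolding refl_mat_def neg_transpose_mat_def using assms
    by (intro eq_matI) (auto simp: e_vec_def transpose_def)
qed

lemma neg_transpose_mat_in_even_signed_perm_mats:
  assumes "a \<noteq> b" "a < n" "b < n"
  shows "neg_transpose_mat n a b \<in> even_signed_perm_mats n"
proof -
  have "{..<n} \<inter> {j. j = a \<or> j = b} = {a, b}" using assms by auto
  then have "(\<Prod>j<n. if j = a \<or> j = b then -1 else 1 :: real) = 1"
    using assms by (simp add: prod.If_cases)
  then show ?thesis
    unfolding neg_transpose_mat_def using assms
    by (intro even_signed_perm_matsI permutes_swap_id) auto
qed

lemma neg_transpose_mat_mult_transpose:
  assumes "a < n" "b < n"
  shows "neg_transpose_mat n a b * perm_mat n (transpose a b) = sign_flip_mat n {a, b}"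
  unfolding neg_transpose_mat_def sign_flip_mat_def perm_mat_eq_signed_perm_mat
    mult_signed_perm_mat[OF permutes_swap_id[OF assms[folded lessThan_iff]]]
  by (intro signed_perm_mat_cong) (auto simp: transpose_def)

lemma D6_simple_reflections:
  "refl_mat 6 ` D6_simple_roots
    = (\<lambda>i. perm_mat 6 (transpose i (Suc i))) ` {..<5} \<union> {neg_transpose_mat 6 4 5}"
proof -
  have roots: "D6_simple_roots
      = (\<lambda>i k. e_vec i k - e_vec (Suc i) k) ` {..<5} \<union> {\<lambda>k. e_vec 4 k + e_vec 5 k}"
    unfolding D6_simple_roots_def by auto
  have "refl_mat 6 ` D6_simple_roots = (\<lambda>i. refl_mat 6 (\<lambda>k. e_vec i k - e_vec (Suc i) k)) ` {..<5}
      \<union> {refl_mat 6 (\<lambda>k. e_vec 4 k + e_vec 5 k)}"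
    unfolding roots by (simp only: image_Un image_image image_insert image_empty)
  also have "(\<lambda>i. refl_mat 6 (\<lambda>k. e_vec i k - e_vec (Suc i) k)) ` {..<5}
      = (\<lambda>i. perm_mat 6 (transpose i (Suc i))) ` {..<5}"
    by (rule image_cong) (simp_all add: refl_mat_e_vec_diff)
  also have "refl_mat 6 (\<lambda>k. e_vec 4 k + e_vec 5 k) = neg_transpose_mat 6 4 5"
    by (simp add: refl_mat_e_vec_sum)
  finally show ?thesis .
qed

lemma generate_D6_simple_reflections:
  "generate (GL_mat 6) (refl_mat 6 ` D6_simple_roots) = even_signed_perm_mats 6"
proof (rule generate_GL_mat_eq_even_signed_perm_mats)
  show "refl_mat 6 ` D6_simple_roots \<subseteq> even_signed_perm_mats 6"
    unfolding D6_simple_reflections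
    by (auto intro!: perm_mat_in_even_signed_perm_mats permutes_swap_id
        neg_transpose_mat_in_even_signed_perm_mats)
  show adj: "perm_mat 6 (transpose i (Suc i)) \<in> generate (GL_mat 6) (refl_mat 6 ` D6_simple_roots)"
    if "Suc i < 6" for i
    using that unfolding D6_simple_reflections by (auto intro: generate.incl)
  have "neg_transpose_mat 6 4 5 \<in> generate (GL_mat 6) (refl_mat 6 ` D6_simple_roots)"
    unfolding D6_simple_reflections by (auto intro: generate.incl)
  then show "sign_flip_mat 6 {4, 5} \<in> generate (GL_mat 6) (refl_mat 6 ` D6_simple_roots)"
    using generate_GL_mat_mult[OF _ adj[of 4]] by (simp add: neg_transpose_mat_mult_transpose[symmetric])
qed auto

text \<open>The matrices that conjugation by \<open>Q_mat\<close> (below) turns into the generators of \<open>M_L\<close>,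
  listed in the order \<open>(12), (23), (34), (56), (67), A\<close>.\<close>

definition M_L_generators_D6 :: "real mat set" where
  "M_L_generators_D6 = {neg_transpose_mat 6 1 2, perm_mat 6 (transpose 0 1), perm_mat 6 (transpose 1 2),
     perm_mat 6 (transpose 3 4), perm_mat 6 (transpose 4 5), perm_mat 6 (transpose 0 5 \<circ> transpose 1 2)}"

lemma M_L_generators_D6_subset: "M_L_generators_D6 \<subseteq> even_signed_perm_mats 6"
  unfolding M_L_generators_D6_def
  by (auto intro!: neg_transpose_mat_in_even_signed_perm_mats perm_mat_in_even_signed_perm_mats
      permutes_compose permutes_swap_id)

lemma generate_M_L_generators_D6: "generate (GL_mat 6) M_L_generators_D6 = even_signed_perm_mats 6"
proof -
  interpret GL: group "GL_mat 6 :: real mat monoid" by (rule GL_mat_group)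
  let ?K = "generate (GL_mat 6) M_L_generators_D6"
  have K: "subgroup ?K (GL_mat 6)"
    using GL.generate_is_subgroup M_L_generators_D6_subset even_signed_perm_mats_GL by blast
  note trans = perm_mat_transpose_trans[OF K]
  have gen: "x \<in> M_L_generators_D6 \<Longrightarrow> x \<in> ?K" for x by (rule generate.incl)
  have t01: "perm_mat 6 (transpose 0 1) \<in> ?K" by (rule gen) (simp add: M_L_generators_D6_def)
  have t12: "perm_mat 6 (transpose 1 2) \<in> ?K" by (rule gen) (simp add: M_L_generators_D6_def)
  have t34: "perm_mat 6 (transpose 3 4) \<in> ?K" by (rule gen) (simp add: M_L_generators_D6_def)
  have t45: "perm_mat 6 (transpose 4 5) \<in> ?K" by (rule gen) (simp add: M_L_generators_D6_def)
  have "perm_mat 6 (transpose 0 5 \<circ> transpose 1 2) * perm_mat 6 (transpose 1 2) = perm_mat 6 (transpose 0 5)"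
    by (simp add: mult_perm_mat permutes_swap_id comp_assoc)
  moreover have "perm_mat 6 (transpose 0 5 \<circ> transpose 1 2) \<in> ?K"
    by (rule gen) (simp add: M_L_generators_D6_def)
  ultimately have t05: "perm_mat 6 (transpose 0 5) \<in> ?K"
    using generate_GL_mat_mult[OF _ t12] by metis
  have t02: "perm_mat 6 (transpose 0 2) \<in> ?K" using trans[OF t01 t12] by simp
  have t25: "perm_mat 6 (transpose 2 5) \<in> ?K" using trans[of 2 0 5] t02 t05 by (simp add: transpose_commute)
  have t35: "perm_mat 6 (transpose 3 5) \<in> ?K" using trans[OF t34 t45] by simp
  have t23: "perm_mat 6 (transpose 2 3) \<in> ?K" using trans[of 2 5 3] t25 t35 by (simp add: transpose_commute)
  have adj: "perm_mat 6 (transpose i (Suc i)) \<in> ?K" if "Suc i < 6" for i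
  proof -
    have "i = 0 \<or> i = 1 \<or> i = 2 \<or> i = 3 \<or> i = 4" using that by auto
    then show ?thesis using t01 t12 t23 t34 t45 by (auto simp: numeral_eq_Suc)
  qed
  have "neg_transpose_mat 6 1 2 \<in> ?K" by (rule gen) (simp add: M_L_generators_D6_def)
  then have "sign_flip_mat 6 {1, 2} \<in> ?K"
    using generate_GL_mat_mult[OF _ t12] by (simp add: neg_transpose_mat_mult_transpose[symmetric])
  then show ?thesis
    using generate_GL_mat_eq_even_signed_perm_mats[OF M_L_generators_D6_subset adj] by simp
qed

section \<open>The representation of \<open>W(D\<^sub>6)\<close> on \<open>\<complex>\<^sup>7\<close>\<close>

text \<open>The last column of \<open>Q_mat\<close> is the common fixed vector \<open>(1,1,1,1,2,2,2)\<close> of the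
  generators of \<open>M_L\<close>.\<close>

definition Q_mat :: "complex mat" where
  "Q_mat = mat 7 7 (\<lambda>(i,j).
    [[1,1,1,1,1,1,1],[1,-1,-1,1,1,1,1],[-1,1,-1,1,1,1,1],[-1,-1,1,1,1,1,1],
     [0,0,0,0,2,2,2],[0,0,0,2,0,2,2],[0,0,0,2,2,0,2]] ! i ! j)"

definition Q_inv_mat :: "complex mat" where
  "Q_inv_mat = mat 7 7 (\<lambda>(i,j).
    [[1/4,1/4,-1/4,-1/4,0,0,0],[1/4,-1/4,1/4,-1/4,0,0,0],[1/4,-1/4,-1/4,1/4,0,0,0],
     [1/4,1/4,1/4,1/4,-1/2,0,0],[1/4,1/4,1/4,1/4,0,-1/2,0],[1/4,1/4,1/4,1/4,0,0,-1/2],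
     [-1/2,-1/2,-1/2,-1/2,1/2,1/2,1/2]] ! i ! j)"

lemma less_7_cases: "(i::nat) < 7 \<longleftrightarrow> i = 0 \<or> i = 1 \<or> i = 2 \<or> i = 3 \<or> i = 4 \<or> i = 5 \<or> i = 6"
  by auto

lemma sum_upt_7:
  "(\<Sum>i::nat = 0..<7. f i) = f 0 + f 1 + f 2 + f 3 + f 4 + f 5 + (f 6 :: 'a::comm_monoid_add)"
  by (simp add: numeral_eq_Suc atLeast0LessThan lessThan_Suc add_ac)

lemma Q_mat_carrier [simp]: "Q_mat \<in> carrier_mat 7 7"
  and Q_inv_mat_carrier [simp]: "Q_inv_mat \<in> carrier_mat 7 7"
  by (simp_all add: Q_mat_def Q_inv_mat_def)

lemma Q_mat_inverse: "Q_mat * Q_inv_mat = 1\<^sub>m 7" "Q_inv_mat * Q_mat = 1\<^sub>m 7"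
  by (rule eq_matI; auto simp: Q_mat_def Q_inv_mat_def scalar_prod_def sum_upt_7 less_7_cases)+

definition extend_mat :: "real mat \<Rightarrow> complex mat" where
  "extend_mat X = four_block_mat (map_mat complex_of_real X) (0\<^sub>m 6 1) (0\<^sub>m 1 6) (1\<^sub>m 1)"

lemma extend_mat_carrier [simp]: "X \<in> carrier_mat 6 6 \<Longrightarrow> extend_mat X \<in> carrier_mat 7 7"
  unfolding extend_mat_def by (rule four_block_carrier_mat[of _ 6 6 _ 1 1, simplified]) auto

lemma dim_extend_mat [simp]:
  "X \<in> carrier_mat 6 6 \<Longrightarrow> dim_row (extend_mat X) = 7"
  "X \<in> carrier_mat 6 6 \<Longrightarrow> dim_col (extend_mat X) = 7"
  by (simp_all add: extend_mat_def)

lemma index_extend_mat: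
  "X \<in> carrier_mat 6 6 \<Longrightarrow> i < 7 \<Longrightarrow> j < 7 \<Longrightarrow> extend_mat X $$ (i,j) =
    (if i < 6 \<and> j < 6 then complex_of_real (X $$ (i,j)) else if i = j then 1 else 0)"
  by (auto simp: extend_mat_def)

lemma extend_mat_mult:
  assumes X: "X \<in> carrier_mat 6 6" and Y: "Y \<in> carrier_mat 6 6"
  shows "extend_mat (X * Y) = extend_mat X * extend_mat Y"
proof -
  have mX: "map_mat complex_of_real X \<in> carrier_mat 6 6" and mY: "map_mat complex_of_real Y \<in> carrier_mat 6 6"
    using X Y by simp_all
  have "extend_mat X * extend_mat Y = four_block_mat
     (map_mat complex_of_real X * map_mat complex_of_real Y + 0\<^sub>m 6 1 * 0\<^sub>m 1 6)
     (map_mat complex_of_real X * 0\<^sub>m 6 1 + 0\<^sub>m 6 1 * 1\<^sub>m 1)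
     (0\<^sub>m 1 6 * map_mat complex_of_real Y + 1\<^sub>m 1 * 0\<^sub>m 1 6)
     (0\<^sub>m 1 6 * 0\<^sub>m 6 1 + 1\<^sub>m 1 * 1\<^sub>m 1)"
    unfolding extend_mat_def by (rule mult_four_block_mat) (use mX mY in auto)
  also have "\<dots> = extend_mat (X * Y)"
    unfolding extend_mat_def using mX mY X Y by (simp add: of_real_hom.mat_hom_mult[OF X Y])
  finally show ?thesis by simp
qed

lemma extend_mat_one: "extend_mat (1\<^sub>m 6) = 1\<^sub>m 7"
proof -
  have "extend_mat (1\<^sub>m 6) = 1\<^sub>m (6 + 1)"
    unfolding extend_mat_def of_real_hom.mat_hom_one by (rule four_block_one_mat)
  then show ?thesis by simp
qed

lemma perm_mat_transpose_mult:
  assumes ab: "a < n" "b < n" and M: "M \<in> carrier_mat n n"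
  shows "perm_mat n (transpose a b) * M = mat n n (\<lambda>(i,j). M $$ (transpose a b i, j))"
proof (rule eq_matI)
  fix i j assume i: "i < dim_row (mat n n (\<lambda>(i,j). M $$ (transpose a b i, j)))"
    and j: "j < dim_col (mat n n (\<lambda>(i,j). M $$ (transpose a b i, j)))"
  have ti: "transpose a b i < n" using i ab by (auto simp: transpose_def)
  have "(perm_mat n (transpose a b) * M) $$ (i,j) =
     (\<Sum>k\<in>{0..<n}. (if i = transpose a b k then 1 else 0) * M $$ (k,j))"
    using i j M by (simp add: perm_mat_def scalar_prod_def)
  also have "\<dots> = (\<Sum>k\<in>{0..<n}. if k = transpose a b i then M $$ (k,j) else 0)"
    by (intro sum.cong) (auto simp: transpose_def)
  also have "\<dots> = M $$ (transpose a b i, j)" using ti by (simp add: sum.delta)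
  finally show "(perm_mat n (transpose a b) * M) $$ (i,j) = mat n n (\<lambda>(i,j). M $$ (transpose a b i, j)) $$ (i,j)"
    using i j by simp
qed (use M in \<open>auto simp: perm_mat_def\<close>)

lemma mult_extend_signed_perm_mat:
  assumes M: "M \<in> carrier_mat 7 7" and \<sigma>: "\<sigma> permutes {..<6}"
  shows "M * extend_mat (signed_perm_mat 6 \<sigma> s)
    = mat 7 7 (\<lambda>(i,j). if j < 6 then M $$ (i, \<sigma> j) * complex_of_real (s j) else M $$ (i,j))"
    (is "_ = ?R")
proof (rule eq_matI)
  fix i j assume i: "i < dim_row ?R" and j: "j < dim_col ?R"
  have "(M * extend_mat (signed_perm_mat 6 \<sigma> s)) $$ (i,j)
      = (\<Sum>k\<in>{0..<7}. M $$ (i,k) * extend_mat (signed_perm_mat 6 \<sigma> s) $$ (k,j))"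
    using i j M by (simp add: scalar_prod_def)
  also have "\<dots> = (if j < 6 then M $$ (i, \<sigma> j) * complex_of_real (s j) else M $$ (i,j))"
  proof (cases "j < 6")
    case True
    have sj: "\<sigma> j < 6" using permutes_in_image[OF \<sigma>] True by simp
    have "(\<Sum>k\<in>{0..<7}. M $$ (i,k) * extend_mat (signed_perm_mat 6 \<sigma> s) $$ (k,j)) =
          (\<Sum>k\<in>{0..<7}. if k = \<sigma> j then M $$ (i,k) * complex_of_real (s j) else 0)"
      using True sj j by (intro sum.cong) (auto simp: index_extend_mat)
    also have "\<dots> = M $$ (i, \<sigma> j) * complex_of_real (s j)" using sj by (simp add: sum.delta)
    finally show ?thesis using True by simp
  next
    case False
    then have j6: "j = 6" using j by simp
    have "(\<Sum>k\<in>{0..<7}. M $$ (i,k) * extend_mat (signed_perm_mat 6 \<sigma> s) $$ (k,j)) =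
          (\<Sum>k\<in>{0..<7}. if k = 6 then M $$ (i,k) else 0)"
      using j6 by (intro sum.cong) (auto simp: index_extend_mat)
    also have "\<dots> = M $$ (i, j)" using j6 by (simp add: sum.delta)
    finally show ?thesis using False by simp
  qed
  finally show "(M * extend_mat (signed_perm_mat 6 \<sigma> s)) $$ (i,j) = ?R $$ (i,j)"
    using i j by simp
qed (use M in auto)

lemma A_mat_eq: "A_mat = mat 7 7 (\<lambda>(i,j).
    [[1,0,0,0,0,0,0],
     [0,1,0,0,0,0,0],
     [0,0,-1,0,0,0,1],
     [0,0,0,-1,0,0,1],
     [0,0,-1,-1,1,0,1],
     [0,0,-1,-1,0,1,1],
     [0,0,0,0,0,0,1]] ! i ! j)"
  unfolding A_mat_def mat_of_rows_list_def by (simp add: numeral_eq_Suc)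

lemma Q_mat_intertwines_M_L_generators:
  "perm_mat 7 (transpose 0 1) * Q_mat = Q_mat * extend_mat (neg_transpose_mat 6 1 2)"
  "perm_mat 7 (transpose 1 2) * Q_mat = Q_mat * extend_mat (perm_mat 6 (transpose 0 1))"
  "perm_mat 7 (transpose 2 3) * Q_mat = Q_mat * extend_mat (perm_mat 6 (transpose 1 2))"
  "perm_mat 7 (transpose 4 5) * Q_mat = Q_mat * extend_mat (perm_mat 6 (transpose 3 4))"
  "perm_mat 7 (transpose 5 6) * Q_mat = Q_mat * extend_mat (perm_mat 6 (transpose 4 5))"
  "A_mat * Q_mat = Q_mat * extend_mat (perm_mat 6 (transpose 0 5 \<circ> transpose 1 2))"
proof -
  have p: "transpose 0 5 \<circ> transpose 1 2 permutes {..<6::nat}"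
    by (intro permutes_compose permutes_swap_id) auto
  show "A_mat * Q_mat = Q_mat * extend_mat (perm_mat 6 (transpose 0 5 \<circ> transpose 1 2))"
    unfolding perm_mat_eq_signed_perm_mat mult_extend_signed_perm_mat[OF Q_mat_carrier p]
    by (rule eq_matI) (auto simp: A_mat_eq Q_mat_def scalar_prod_def sum_upt_7 less_7_cases transpose_def)
  have t: "a < 6 \<Longrightarrow> b < 6 \<Longrightarrow> transpose a b permutes {..<6::nat}" for a b
    by (intro permutes_swap_id) auto
  show "perm_mat 7 (transpose 0 1) * Q_mat = Q_mat * extend_mat (neg_transpose_mat 6 1 2)"
    unfolding neg_transpose_mat_def
    by (simp add: perm_mat_transpose_mult mult_extend_signed_perm_mat[OF Q_mat_carrier t])
      (rule eq_matI, auto simp: Q_mat_def less_7_cases transpose_def)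
  note intertwine = perm_mat_eq_signed_perm_mat[of 6] perm_mat_transpose_mult
    mult_extend_signed_perm_mat[OF Q_mat_carrier t]
  show "perm_mat 7 (transpose 1 2) * Q_mat = Q_mat * extend_mat (perm_mat 6 (transpose 0 1))"
    by (simp add: intertwine) (rule eq_matI, auto simp: Q_mat_def less_7_cases transpose_def)
  show "perm_mat 7 (transpose 2 3) * Q_mat = Q_mat * extend_mat (perm_mat 6 (transpose 1 2))"
    by (simp add: intertwine) (rule eq_matI, auto simp: Q_mat_def less_7_cases transpose_def)
  show "perm_mat 7 (transpose 4 5) * Q_mat = Q_mat * extend_mat (perm_mat 6 (transpose 3 4))"
    by (simp add: intertwine) (rule eq_matI, auto simp: Q_mat_def less_7_cases transpose_def)
  show "perm_mat 7 (transpose 5 6) * Q_mat = Q_mat * extend_mat (perm_mat 6 (transpose 4 5))"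
    by (simp add: intertwine) (rule eq_matI, auto simp: Q_mat_def less_7_cases transpose_def)
qed

lemma mult_carrier_mat_7 [simp]:
  "A \<in> carrier_mat 7 7 \<Longrightarrow> B \<in> carrier_mat 7 7 \<Longrightarrow> A * B \<in> carrier_mat 7 7"
  by (rule mult_carrier_mat)

lemma assoc_mult_mat_7:
  "A \<in> carrier_mat 7 7 \<Longrightarrow> B \<in> carrier_mat 7 7 \<Longrightarrow> C \<in> carrier_mat 7 7 \<Longrightarrow> A * B * C = A * (B * C)"
  by (rule assoc_mult_mat)

lemma Q_inv_mat_cancel: "Z \<in> carrier_mat 7 7 \<Longrightarrow> Q_inv_mat * (Q_mat * Z) = Z"
  by (simp flip: assoc_mult_mat_7 add: Q_mat_inverse)

definition rho :: "real mat \<Rightarrow> complex mat" where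
  "rho X = Q_mat * extend_mat X * Q_inv_mat"

lemma rho_carrier: "X \<in> carrier_mat 6 6 \<Longrightarrow> rho X \<in> carrier_mat 7 7"
  by (simp add: rho_def)

lemma rho_mult:
  "X \<in> carrier_mat 6 6 \<Longrightarrow> Y \<in> carrier_mat 6 6 \<Longrightarrow> rho (X * Y) = rho X * rho Y"
  by (simp add: rho_def assoc_mult_mat_7 Q_inv_mat_cancel extend_mat_mult)

lemma rho_one: "rho (1\<^sub>m 6) = 1\<^sub>m 7"
  by (simp add: rho_def extend_mat_one Q_mat_inverse right_mult_one_mat[OF Q_mat_carrier])

lemma rho_group_hom: "group_hom (GL_mat 6) (GL_mat 7) rho"
proof -
  have "rho X \<in> carrier (GL_mat 7)" if "X \<in> carrier (GL_mat 6)" for X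
  proof -
    obtain B where X: "X \<in> carrier_mat 6 6" and B: "B \<in> carrier_mat 6 6" "X * B = 1\<^sub>m 6" "B * X = 1\<^sub>m 6"
      using \<open>X \<in> carrier (GL_mat 6)\<close> by (rule GL_mat_memE)
    show ?thesis
      using rho_mult[OF X B(1)] rho_mult[OF B(1) X] B
      by (intro GL_mat_memI[OF rho_carrier[OF X] rho_carrier[OF B(1)]]) (simp_all add: rho_one)
  qed
  then have "rho \<in> hom (GL_mat 6) (GL_mat 7)"
    by (auto simp: hom_def GL_mat_simps rho_mult)
  then show ?thesis
    unfolding group_hom_def group_hom_axioms_def by (simp add: GL_mat_group)
qed

lemma rho_inj: "inj_on rho (carrier (GL_mat 6))"
proof (rule inj_onI)
  fix X Y assume "X \<in> carrier (GL_mat 6)" "Y \<in> carrier (GL_mat 6)" and eq: "rho X = rho Y"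
  then have X: "X \<in> carrier_mat 6 6" and Y: "Y \<in> carrier_mat 6 6" by (auto simp: GL_mat_simps)
  have "Q_inv_mat * rho Z * Q_mat = extend_mat Z" if "Z \<in> carrier_mat 6 6" for Z
    using that by (simp add: rho_def assoc_mult_mat_7 Q_inv_mat_cancel Q_mat_inverse)
  then have ext: "extend_mat X = extend_mat Y" using X Y eq by metis
  show "X = Y"
  proof (rule eq_matI)
    fix i j assume "i < dim_row Y" "j < dim_col Y"
    moreover have "extend_mat X $$ (i,j) = extend_mat Y $$ (i,j)" by (simp add: ext)
    ultimately show "X $$ (i,j) = Y $$ (i,j)" using X Y by (simp add: index_extend_mat)
  qed (use X Y in auto)
qed

lemma rho_eqI:
  assumes "g \<in> carrier_mat 7 7" "h \<in> carrier_mat 6 6" "g * Q_mat = Q_mat * extend_mat h"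
  shows "rho h = g"
proof -
  have "rho h = (g * Q_mat) * Q_inv_mat" unfolding rho_def assms(3) ..
  also have "\<dots> = g" using assms(1) by (simp add: assoc_mult_mat_7 Q_mat_inverse)
  finally show ?thesis .
qed

lemma M_L_generators_eq_image:
  "{perm_mat 7 (transpose 0 1), perm_mat 7 (transpose 1 2), perm_mat 7 (transpose 2 3),
      perm_mat 7 (transpose 4 5), perm_mat 7 (transpose 5 6), A_mat} = rho ` M_L_generators_D6"
proof -
  have p: "perm_mat 7 \<sigma> \<in> carrier_mat 7 7" for \<sigma> by (simp add: perm_mat_def)
  have A: "A_mat \<in> carrier_mat 7 7" by (simp add: A_mat_eq)
  note I = Q_mat_intertwines_M_L_generators
  show ?thesis
    unfolding M_L_generators_D6_def
    using rho_eqI[OF p _ I(1)] rho_eqI[OF p _ I(2)] rho_eqI[OF p _ I(3)] rho_eqI[OF p _ I(4)]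
      rho_eqI[OF p _ I(5)] rho_eqI[OF A _ I(6)]
    by (simp add: neg_transpose_mat_def perm_mat_eq_signed_perm_mat[of 6])
qed

theorem theorem6p1:
  shows "M_L \<cong> W_D6 \<and> card (carrier W_D6) = 23040"
proof -
  have W_D6_carrier: "carrier W_D6 = even_signed_perm_mats 6"
    by (simp add: W_D6_def gen_subgroup_def generate_D6_simple_reflections)
  have "rho \<in> iso (gen_subgroup 6 M_L_generators_D6) (gen_subgroup 7 (rho ` M_L_generators_D6))"
    unfolding gen_subgroup_def
    using M_L_generators_D6_subset even_signed_perm_mats_GL
    by (intro group_hom.generate_iso_image[OF rho_group_hom rho_inj]) auto
  moreover have "gen_subgroup 6 M_L_generators_D6 = W_D6"
    by (simp add: W_D6_def gen_subgroup_def generate_D6_simple_reflections generate_M_L_generators_D6)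
  moreover have "gen_subgroup 7 (rho ` M_L_generators_D6) = M_L"
    unfolding M_L_def M_L_generators_eq_image ..
  ultimately have "W_D6 \<cong> M_L" by (auto intro: is_isoI)
  moreover have "group W_D6"
    unfolding W_D6_def gen_subgroup_def generate_D6_simple_reflections
    by (rule group.subgroup_imp_group[OF GL_mat_group even_signed_perm_mats_subgroup])
  moreover have "card (even_signed_perm_mats 6) = 23040"
    using card_even_signed_perm_mats[of 5] by (simp add: fact_numeral)
  ultimately show ?thesis using group.iso_sym W_D6_carrier by metis
qed

end
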